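(* Let $Z_1,Z_2,\ldots$ be i.i.d. standard normal random variables, $\bar Z(n)=\frac1n\sum_{j=1}^nZ_j$, $n_0$ a positive integer, and $\tilde N(x;n_0)=\inf\{n\ge n_0:\bar Z(n)<x\}$ (with $\inf\emptyset=\infty$). Then: (1) for any $x>0$, $\Pr\{\tilde N(x;n_0)<\infty\}=1$ and $\mathrm E[\tilde N(x;n_0)]<\infty$; (2) for any $x<0$, $0<\Pr\{\tilde N(x;n_0)<\infty\}<1$ and $\mathrm E[\tilde N(x;n_0)]=\infty$; (3) for $x=0$, $\Pr\{\tilde N(0;n_0)<\infty\}=1$ and $\mathrm E[\tilde N(0;n_0)]=\infty$. *)

theory Defs
  imports "HOL-Probability.Probability"
begin

definition Zbar :: "(nat \<Rightarrow> 'a \<Rightarrow> real) \<Rightarrow> nat \<Rightarrow> 'a \<Rightarrow> real" where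
  "Zbar Z n \<omega> = (\<Sum>j = 1..n. Z j \<omega>) / real n"

text \<open>First passage time inf {n >= n0. Zbar n < x}, with inf of the empty set = infinity;
  valued in ennreal so that its expectation is a nonnegative integral.\<close>
definition Ntilde :: "(nat \<Rightarrow> 'a \<Rightarrow> real) \<Rightarrow> real \<Rightarrow> nat \<Rightarrow> 'a \<Rightarrow> ennreal" where
  "Ntilde Z x n0 \<omega> =
     (if \<exists>n\<ge>n0. Zbar Z n \<omega> < x
      then ennreal (real (LEAST n. n \<ge> n0 \<and> Zbar Z n \<omega> < x))
      else \<infinity>)"

end

theory Submission
  imports Defs
begin

text \<open>
  Write \<open>S\<^sub>n = Z\<^sub>1 + ... + Z\<^sub>n\<close>, so that \<open>Zbar n < x\<close> iff \<open>S\<^sub>n < n x\<close>.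

  For \<open>x > 0\<close>, Markov's inequality for the fourth moment gives
  \<open>P(Zbar n \<ge> x) \<le> 3 / (x\<^sup>4 n\<^sup>2)\<close>. Since \<open>Ntilde\<close> is at most \<open>n\<^sub>0\<close> plus the number of
  \<open>n \<ge> n\<^sub>0\<close> with \<open>Zbar n \<ge> x\<close>, its expectation is at most \<open>n\<^sub>0 + \<Sum>\<^sub>n P(Zbar n \<ge> x) < \<infinity>\<close>,
  and a variable with finite expectation is finite almost surely.

  For \<open>x < 0\<close>, the same tail bound and a union bound show that for \<open>m\<close> large, with positive
  probability \<open>S\<^sub>n - S\<^sub>m \<ge> n x\<close> for all \<open>n > m\<close>. Independently of this, \<open>Z\<^sub>1, ..., Z\<^sub>m > 0\<close> with
  positive probability, and on the intersection \<open>S\<^sub>n \<ge> n x\<close> for every \<open>n\<close>, i.e. \<open>Ntilde = \<infinity>\<close>.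

  For \<open>x = 0\<close>, the event \<open>liminf S\<^sub>k / \<surd>k \<le> -1\<close> is a tail event of probability at least
  \<open>P(Z\<^sub>1 < -1) > 0\<close>, hence of probability 1 by Kolmogorov's 0-1 law, and on it some \<open>S\<^sub>k\<close> with
  \<open>k \<ge> n\<^sub>0\<close> is negative. For the expectation let \<open>A\<^sub>n\<close> be the event \<open>S\<^sub>1, ..., S\<^sub>n \<ge> 0\<close>. As
  \<open>Z\<^sub>n\<^sub>+\<^sub>1\<close> is centred and independent of \<open>A\<^sub>n\<close>, \<open>E[S\<^sub>n; A\<^sub>n]\<close> is nondecreasing, hence at least
  \<open>E[Z\<^sub>1; Z\<^sub>1 \<ge> 0] = 1 / \<surd>(2\<pi>)\<close>. Together with \<open>E S\<^sub>n\<^sup>2 = n\<close> and \<open>2 s t \<le> s\<^sup>2 + t\<^sup>2\<close> this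
  forces \<open>P(A\<^sub>n) \<ge> 1 / (2 \<pi> n)\<close>, and \<open>Ntilde \<ge> \<Sum>\<^sub>n 1\<^bsub>A\<^sub>n\<^esub>\<close> has expectation at least the
  harmonic series.
\<close>

section \<open>Pathwise bounds on the passage time\<close>

lemma Zbar_less_iff:
  assumes "n \<ge> 1"
  shows "Zbar Z n \<omega> < x \<longleftrightarrow> (\<Sum>j=1..n. Z j \<omega>) < real n * x"
  using assms by (simp add: Zbar_def pos_divide_less_eq mult.commute)

lemma Ntilde_less_top_iff: "Ntilde Z x n0 \<omega> < \<infinity> \<longleftrightarrow> (\<exists>n\<ge>n0. Zbar Z n \<omega> < x)"
  by (simp add: Ntilde_def)

lemma Ntilde_eq_Least:
  assumes "\<exists>n\<ge>n0. Zbar Z n \<omega> < x"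
  shows "Ntilde Z x n0 \<omega> = of_nat (LEAST n. n \<ge> n0 \<and> Zbar Z n \<omega> < x)"
  using assms by (simp add: Ntilde_def ennreal_of_nat_eq_real_of_nat)

lemma of_nat_card_le_suminf_indicator:
  assumes "finite F" "F \<subseteq> S"
  shows "of_nat (card F) \<le> (\<Sum>n. indicator S n :: ennreal)"
proof -
  have "of_nat (card F) = (\<Sum>n\<in>F. indicator S n :: ennreal)"
    using assms by (simp add: indicator_def subset_iff)
  also have "\<dots> \<le> (\<Sum>n. indicator S n)"
    using assms(1) by (intro sum_le_suminf) auto
  finally show ?thesis .
qed

lemma Ntilde_le_count_Zbar_ge:
  "Ntilde Z x n0 \<omega> \<le> of_nat n0 + (\<Sum>n. indicator {n. n0 \<le> n \<and> x \<le> Zbar Z n \<omega>} n)"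
proof (cases "\<exists>n\<ge>n0. Zbar Z n \<omega> < x")
  case True
  define m where "m = (LEAST n. n \<ge> n0 \<and> Zbar Z n \<omega> < x)"
  have "m \<ge> n0"
    using LeastI_ex[OF True] by (simp add: m_def)
  moreover have "{n0..<m} \<subseteq> {n. n0 \<le> n \<and> x \<le> Zbar Z n \<omega>}"
    using not_less_Least[of _ "\<lambda>n. n \<ge> n0 \<and> Zbar Z n \<omega> < x"] by (auto simp: m_def not_less)
  then have "of_nat (m - n0) \<le> (\<Sum>n. indicator {n. n0 \<le> n \<and> x \<le> Zbar Z n \<omega>} n :: ennreal)"
    using of_nat_card_le_suminf_indicator[of "{n0..<m}"] by simp
  ultimately show ?thesis
    using True by (simp add: Ntilde_eq_Least m_def[symmetric]) (metis add_left_mono le_add_diff_inverse of_nat_add)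
next
  case False
  have "of_nat K \<le> (\<Sum>n. indicator {n. n0 \<le> n \<and> x \<le> Zbar Z n \<omega>} n :: ennreal)" for K
    using False of_nat_card_le_suminf_indicator[of "{n0..<n0+K}"] by (simp add: subset_iff not_less)
  then have "(\<Sum>n. indicator {n. n0 \<le> n \<and> x \<le> Zbar Z n \<omega>} n :: ennreal) = \<infinity>"
    by (metis ennreal_Ex_less_of_nat infinity_ennreal_def not_le top.not_eq_extremum)
  then show ?thesis by simp
qed

lemma Zbar_ge_if_pos_prefix:
  assumes "x < 0" and "\<forall>j\<in>{1..m}. 0 < Z j \<omega>" and "\<forall>n>m. real n * x \<le> (\<Sum>j\<in>{m<..n}. Z j \<omega>)"
  shows "x \<le> Zbar Z n \<omega>"
proof (cases "n = 0")
  case False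
  have "(\<Sum>j=1..n. Z j \<omega>) = (\<Sum>j=1..min n m. Z j \<omega>) + (\<Sum>j\<in>{m<..n}. Z j \<omega>)"
    by (subst sum.union_disjoint[symmetric]) (auto intro!: sum.cong)
  moreover have "0 \<le> (\<Sum>j=1..min n m. Z j \<omega>)"
    using assms(2) by (intro sum_nonneg) (auto intro: less_imp_le)
  moreover have "real n * x \<le> (\<Sum>j\<in>{m<..n}. Z j \<omega>)"
    using assms(1,3) by (cases "m < n") (auto intro: mult_nonneg_nonpos)
  ultimately show ?thesis
    using False Zbar_less_iff[of n Z \<omega> x] by simp
qed (use assms in \<open>simp add: Zbar_def\<close>)

lemma count_nonneg_partial_sums_le_Ntilde:
  assumes "n0 \<ge> 1"
  shows "(\<Sum>n. indicator {n. \<forall>k\<in>{1..n}. 0 \<le> (\<Sum>j=1..k. Z j \<omega>)} n) \<le> Ntilde Z 0 n0 \<omega>"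
proof (cases "\<exists>n\<ge>n0. Zbar Z n \<omega> < 0")
  case True
  define m where "m = (LEAST n. n \<ge> n0 \<and> Zbar Z n \<omega> < 0)"
  have "m \<ge> n0" "Zbar Z m \<omega> < 0"
    using LeastI_ex[OF True] by (auto simp: m_def)
  with assms have "m \<ge> 1" "(\<Sum>j=1..m. Z j \<omega>) < 0"
    using Zbar_less_iff[of m Z \<omega> 0] by auto
  then have "{n. \<forall>k\<in>{1..n}. 0 \<le> (\<Sum>j=1..k. Z j \<omega>)} \<subseteq> {..<m}"
    by (auto simp: not_less[symmetric])
  then have "(\<Sum>n. indicator {n. \<forall>k\<in>{1..n}. 0 \<le> (\<Sum>j=1..k. Z j \<omega>)} n :: ennreal)
      = (\<Sum>n<m. indicator {n. \<forall>k\<in>{1..n}. 0 \<le> (\<Sum>j=1..k. Z j \<omega>)} n)"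
    by (intro suminf_finite) (auto simp: indicator_def)
  also have "\<dots> \<le> (\<Sum>n<m. 1)"
    by (intro sum_mono) (simp add: indicator_def)
  finally show ?thesis
    using True by (simp add: Ntilde_eq_Least m_def)
qed (auto simp: Ntilde_def)

lemma frequently_below_cong:
  fixes a b :: "nat \<Rightarrow> real"
  assumes "(\<lambda>k. a k - b k) \<longlonglongrightarrow> 0"
  shows "(\<forall>i m. \<exists>k\<ge>m. a k < c + 1 / real (Suc i)) \<longleftrightarrow> (\<forall>i m. \<exists>k\<ge>m. b k < c + 1 / real (Suc i))"
proof -
  have transfer: "\<forall>i m. \<exists>k\<ge>m. v k < c + 1 / real (Suc i)"
    if lim: "(\<lambda>k. u k - v k) \<longlonglongrightarrow> 0" and freq: "\<forall>i m. \<exists>k\<ge>m. u k < c + 1 / real (Suc i)"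
    for u v :: "nat \<Rightarrow> real"
  proof (intro allI)
    fix i m
    define e where "e = 1 / real (Suc (2 * i + 1))"
    have "e > 0" and two_e: "2 * e = 1 / real (Suc i)"
      by (simp_all add: e_def field_simps)
    obtain m0 where m0: "\<And>k. k \<ge> m0 \<Longrightarrow> \<bar>u k - v k\<bar> < e"
      using LIMSEQ_D[OF lim \<open>e > 0\<close>] by auto
    obtain k where "k \<ge> max m m0" "u k < c + e"
      using freq unfolding e_def by blast
    with m0[of k] two_e show "\<exists>k\<ge>m. v k < c + 1 / real (Suc i)"
      by (intro exI[of _ k]) auto
  qed
  have "(\<lambda>k. b k - a k) \<longlonglongrightarrow> 0"
    using tendsto_minus[OF assms] by simp
  with transfer[OF assms] transfer[of b a] show ?thesis
    by blast
qed

context prob_space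
begin

lemma std_normal_abs_ge_prob_le:
  assumes X: "distributed M lborel X std_normal_density" and "t > 0"
  shows "prob {\<omega>\<in>space M. t \<le> \<bar>X \<omega>\<bar>} \<le> 3 / t^4"
proof -
  have [measurable]: "X \<in> borel_measurable M"
    using X by (metis distributed_measurable measurable_lborel1)
  have "(\<integral>\<omega>. X \<omega> ^ 4 \<partial>M) = (\<integral>x. std_normal_density x * x ^ (2*2) \<partial>lborel)"
    using distributed_integral[OF X, of "\<lambda>x. x^4"] by simp
  also have "\<dots> = 3"
    by (subst integral_std_normal_moment_even) (simp add: fact_numeral)
  finally have fourth_moment: "(\<integral>\<omega>. X \<omega> ^ 4 \<partial>M) = 3" .
  have "t \<le> \<bar>y\<bar> \<longleftrightarrow> t^4 \<le> y^4" for y :: real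
    using power_mono_iff[of t "\<bar>y\<bar>" 4] \<open>t > 0\<close> by (simp add: power_even_abs_numeral)
  then have "prob {\<omega>\<in>space M. t \<le> \<bar>X \<omega>\<bar>} = prob {\<omega>\<in>space M. t^4 \<le> X \<omega> ^ 4}"
    by simp
  also have "\<dots> \<le> (\<integral>\<omega>. X \<omega> ^ 4 \<partial>M) / t^4"
    using \<open>t > 0\<close> distributed_integrable[OF X, of "\<lambda>x. x^4"] integrable_std_normal_moment[of 4]
    by (intro integral_Markov_inequality_measure[where A="space M"]) auto
  finally show ?thesis
    using fourth_moment by simp
qed

lemma std_normal_less_prob:
  assumes "distributed M lborel X std_normal_density"
  shows "prob {\<omega>\<in>space M. X \<omega> < c} = measure (density lborel std_normal_density) {..<c}"
proof -
  have "X \<in> borel_measurable M"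
    using assms by (metis distributed_measurable measurable_lborel1)
  then have "prob {\<omega>\<in>space M. X \<omega> < c} = measure (distr M lborel X) {..<c}"
    by (subst measure_distr) (auto simp: vimage_def Int_def conj_commute)
  then show ?thesis
    using distributed_distr_eq_density[OF assms] by simp
qed

lemma std_normal_measure_lessThan_pos: "0 < measure (density lborel std_normal_density) {..<c}"
proof -
  interpret N: prob_space "density lborel std_normal_density"
    by (rule prob_space_normal_density) simp
  have density_nonzero: "std_normal_density x \<noteq> 0" for x
    using normal_density_pos[of 1 0 x] by simp
  have "\<not> (AE x in lborel. ennreal (std_normal_density x) * indicator {..<c} x = 0)"
  proof
    assume "AE x in lborel. ennreal (std_normal_density x) * indicator {..<c} x = 0"
    then have "AE x in lborel. x \<notin> {c - 1..c - 1/2}"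
      using density_nonzero
      by (elim AE_mp, intro AE_I2 impI) (auto simp: indicator_def split: if_splits)
    then have "{c - 1..c - 1/2} \<in> null_sets lborel"
      by (subst AE_iff_null_sets) auto
    then show False
      by (auto simp: null_sets_def)
  qed
  then have "emeasure (density lborel std_normal_density) {..<c} \<noteq> 0"
    by (simp add: emeasure_density nn_integral_0_iff_AE)
  then show ?thesis
    by (simp add: N.emeasure_eq_measure zero_less_measure_iff)
qed

lemma std_normal_less_prob_pos:
  assumes "distributed M lborel X std_normal_density"
  shows "0 < prob {\<omega>\<in>space M. X \<omega> < c}"
  using std_normal_less_prob[OF assms] std_normal_measure_lessThan_pos by simp

lemma std_normal_uminus:
  assumes "distributed M lborel X std_normal_density"
  shows "distributed M lborel (\<lambda>\<omega>. - X \<omega>) std_normal_density"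
  using normal_density_affine[OF assms, of "-1" 0] by simp

lemma prob_infinitely_often_ge:
  fixes A :: "nat \<Rightarrow> 'a set"
  assumes sets: "\<And>k. A k \<in> events" and ge: "\<And>k. p \<le> prob (A k)"
  shows "p \<le> prob (\<Inter>m. \<Union>k\<in>{m..}. A k)"
proof -
  have "(\<Union>k\<in>{m..}. A k) \<in> events" for m
    using sets by blast
  then have tail_sets: "range (\<lambda>m. \<Union>k\<in>{m..}. A k) \<subseteq> events"
    by auto
  have "decseq (\<lambda>m. \<Union>k\<in>{m..}. A k)"
    by (rule decseq_SucI) (auto intro: Suc_leD)
  with tail_sets have "(\<lambda>m. prob (\<Union>k\<in>{m..}. A k)) \<longlonglongrightarrow> prob (\<Inter>m. \<Union>k\<in>{m..}. A k)"
    by (rule finite_Lim_measure_decseq)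
  moreover have "p \<le> prob (\<Union>k\<in>{m..}. A k)" for m
    using ge[of m] finite_measure_mono[of "A m" "\<Union>k\<in>{m..}. A k"] tail_sets by fastforce
  ultimately show ?thesis
    by (intro LIMSEQ_le_const) auto
qed

lemma indep_sets_reindex:
  assumes indep: "indep_sets F (f ` I)" and "inj_on f I"
  shows "indep_sets (F \<circ> f) I"
proof (rule indep_setsI)
  show "(F \<circ> f) i \<subseteq> events" if "i \<in> I" for i
    using indep that by (auto simp: indep_sets_def)
next
  fix A J assume J: "J \<noteq> {}" "J \<subseteq> I" "finite J" "\<forall>j\<in>J. A j \<in> (F \<circ> f) j"
  define A' where "A' = A \<circ> inv_into I f"
  have A'_f: "A' (f j) = A j" if "j \<in> J" for j
    using that J(2) \<open>inj_on f I\<close> by (auto simp: A'_def)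
  have "prob (\<Inter>j\<in>J. A j) = prob (\<Inter>y\<in>f ` J. A' y)"
    using A'_f by (auto intro!: arg_cong[where f = prob])
  also have "\<dots> = (\<Prod>y\<in>f ` J. prob (A' y))"
    using J A'_f by (intro indep_setsD[OF indep]) auto
  also have "\<dots> = (\<Prod>j\<in>J. prob (A j))"
    using J \<open>inj_on f I\<close> A'_f by (subst prod.reindex) (auto intro: inj_on_subset)
  finally show "prob (\<Inter>j\<in>J. A j) = (\<Prod>j\<in>J. prob (A j))" .
qed

end

section \<open>Partial sums of i.i.d. standard normal variables\<close>

locale iid_std_normal = prob_space M for M :: "'a measure" +
  fixes Z :: "nat \<Rightarrow> 'a \<Rightarrow> real"
  assumes indep_Z: "indep_vars (\<lambda>_. borel) Z {1..}"
    and distributed_Z: "\<And>j. j \<ge> 1 \<Longrightarrow> distributed M lborel (Z j) std_normal_density"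
begin

lemma Z_measurable: "j \<ge> 1 \<Longrightarrow> Z j \<in> borel_measurable M"
  using distributed_Z by (metis distributed_measurable measurable_lborel1)

lemma borel_measurable_sum_Z: "I \<subseteq> {1..} \<Longrightarrow> (\<lambda>\<omega>. \<Sum>j\<in>I. Z j \<omega>) \<in> borel_measurable M"
  by (intro borel_measurable_sum Z_measurable) auto

lemma borel_measurable_sum_Z_greaterThanAtMost [measurable]:
  "(\<lambda>\<omega>. \<Sum>j\<in>{a<..b}. Z j \<omega>) \<in> borel_measurable M"
  by (rule borel_measurable_sum_Z) auto

lemma borel_measurable_sum_Z_atLeastAtMost [measurable]:
  "(\<lambda>\<omega>. \<Sum>j=1..b. Z j \<omega>) \<in> borel_measurable M"
  by (rule borel_measurable_sum_Z) auto

lemma Zbar_measurable [measurable]: "Zbar Z n \<in> borel_measurable M"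
  unfolding Zbar_def[abs_def] by measurable

lemma sets_Ntilde_less_top [measurable]: "{\<omega>\<in>space M. Ntilde Z x n0 \<omega> < \<infinity>} \<in> events"
  unfolding Ntilde_less_top_iff by measurable

lemma sum_Z_distributed:
  assumes "finite I" "I \<noteq> {}" "I \<subseteq> {1..}"
  shows "distributed M lborel (\<lambda>\<omega>. \<Sum>j\<in>I. Z j \<omega>) (normal_density 0 (sqrt (real (card I))))"
  using sum_indep_normal[of I Z "\<lambda>_. 1" "\<lambda>_. 0"] assms indep_vars_subset[OF indep_Z] distributed_Z
  by auto

lemma std_normal_scaled_sum_Z:
  assumes "finite I" "I \<noteq> {}" "I \<subseteq> {1..}"
  shows "distributed M lborel (\<lambda>\<omega>. (\<Sum>j\<in>I. Z j \<omega>) / sqrt (real (card I))) std_normal_density"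
  using normal_standard_normal_convert[of "sqrt (real (card I))"] sum_Z_distributed[OF assms] assms
  by (simp add: card_gt_0_iff)

lemma sum_Z_abs_ge_prob_le:
  assumes I: "finite I" "I \<noteq> {}" "I \<subseteq> {1..}" and "t > 0"
  shows "prob {\<omega>\<in>space M. t \<le> \<bar>\<Sum>j\<in>I. Z j \<omega>\<bar>} \<le> 3 * real (card I) ^ 2 / t^4"
proof -
  define s where "s = sqrt (real (card I))"
  have "s > 0"
    using I by (simp add: s_def card_gt_0_iff)
  then have "prob {\<omega>\<in>space M. t \<le> \<bar>\<Sum>j\<in>I. Z j \<omega>\<bar>}
      = prob {\<omega>\<in>space M. t / s \<le> \<bar>(\<Sum>j\<in>I. Z j \<omega>) / s\<bar>}"
    by (simp add: divide_le_cancel abs_div)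
  also have "\<dots> \<le> 3 / (t / s)^4"
    using std_normal_scaled_sum_Z[OF I] \<open>s > 0\<close> \<open>t > 0\<close>
    by (intro std_normal_abs_ge_prob_le) (auto simp: s_def)
  also have "\<dots> = 3 * (s^2)^2 / t^4"
    by (simp add: field_simps power_mult_distrib)
  finally show ?thesis
    by (simp add: s_def)
qed

lemma Zbar_ge_prob_le:
  assumes "x > 0"
  shows "prob {\<omega>\<in>space M. x \<le> Zbar Z n \<omega>} \<le> 3 / x^4 * inverse (real n ^ 2)"
proof (cases "n = 0")
  case False
  then have "{\<omega>\<in>space M. x \<le> Zbar Z n \<omega>} \<subseteq> {\<omega>\<in>space M. real n * x \<le> \<bar>\<Sum>j=1..n. Z j \<omega>\<bar>}"
    using Zbar_less_iff[of n Z _ x] by (auto simp: not_less[symmetric])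
  then have "prob {\<omega>\<in>space M. x \<le> Zbar Z n \<omega>}
      \<le> prob {\<omega>\<in>space M. real n * x \<le> \<bar>\<Sum>j=1..n. Z j \<omega>\<bar>}"
    by (intro finite_measure_mono) measurable
  also have "\<dots> \<le> 3 * real (card {1..n}) ^ 2 / (real n * x)^4"
    using False assms by (intro sum_Z_abs_ge_prob_le) auto
  also have "\<dots> = 3 / x^4 * inverse (real n ^ 2)"
    using False assms by (simp add: field_simps power_mult_distrib)
  finally show ?thesis .
qed (use assms in \<open>simp add: Zbar_def\<close>)

section \<open>Positive level\<close>

lemma nn_integral_count_Zbar_ge_finite:
  assumes "x > 0"
  shows "(\<integral>\<^sup>+\<omega>. (\<Sum>n. indicator {\<omega>\<in>space M. n0 \<le> n \<and> x \<le> Zbar Z n \<omega>} \<omega>) \<partial>M) < \<infinity>"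
proof -
  define f where "f n = 3 / x^4 * inverse (real n ^ 2)" for n
  have "summable f"
    unfolding f_def by (intro summable_mult inverse_power_summable) simp
  have f_nonneg: "f n \<ge> 0" for n
    using assms by (simp add: f_def)
  have sets_count [measurable]: "{\<omega>\<in>space M. n0 \<le> n \<and> x \<le> Zbar Z n \<omega>} \<in> events" for n
    by measurable
  have "(\<integral>\<^sup>+\<omega>. (\<Sum>n. indicator {\<omega>\<in>space M. n0 \<le> n \<and> x \<le> Zbar Z n \<omega>} \<omega>) \<partial>M)
      = (\<Sum>n. emeasure M {\<omega>\<in>space M. n0 \<le> n \<and> x \<le> Zbar Z n \<omega>})"
    by (subst nn_integral_suminf) simp_all
  also have "\<dots> \<le> (\<Sum>n. ennreal (f n))"
  proof (intro suminf_le)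
    fix n
    have "prob {\<omega>\<in>space M. n0 \<le> n \<and> x \<le> Zbar Z n \<omega>} \<le> prob {\<omega>\<in>space M. x \<le> Zbar Z n \<omega>}"
      by (rule finite_measure_mono) (blast, measurable)
    then show "emeasure M {\<omega>\<in>space M. n0 \<le> n \<and> x \<le> Zbar Z n \<omega>} \<le> ennreal (f n)"
      using Zbar_ge_prob_le[OF assms, of n] by (simp add: emeasure_eq_measure f_def ennreal_leI)
  qed simp_all
  also have "\<dots> < \<infinity>"
    using ennreal_suminf_neq_top[OF \<open>summable f\<close> f_nonneg] by (simp add: less_top)
  finally show ?thesis .
qed

theorem Ntilde_pos_finite:
  assumes "x > 0"
  shows "(\<integral>\<^sup>+\<omega>. Ntilde Z x n0 \<omega> \<partial>M) < \<infinity>"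
    and "prob {\<omega>\<in>space M. Ntilde Z x n0 \<omega> < \<infinity>} = 1"
proof -
  define count where "count \<omega> = (\<Sum>n. indicator {\<omega>\<in>space M. n0 \<le> n \<and> x \<le> Zbar Z n \<omega>} \<omega> :: ennreal)" for \<omega>
  have count_measurable [measurable]: "count \<in> borel_measurable M"
    unfolding count_def by measurable
  have count_finite: "integral\<^sup>N M count < \<infinity>"
    using nn_integral_count_Zbar_ge_finite[OF assms, of n0] by (simp add: count_def[abs_def])
  have Ntilde_le: "Ntilde Z x n0 \<omega> \<le> of_nat n0 + count \<omega>" if "\<omega> \<in> space M" for \<omega>
    using Ntilde_le_count_Zbar_ge[of Z x n0 \<omega>] that by (simp add: count_def indicator_def)
  have "(\<integral>\<^sup>+\<omega>. Ntilde Z x n0 \<omega> \<partial>M) \<le> (\<integral>\<^sup>+\<omega>. of_nat n0 + count \<omega> \<partial>M)"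
    by (intro nn_integral_mono Ntilde_le)
  also have "\<dots> = of_nat n0 + integral\<^sup>N M count"
    by (subst nn_integral_add) (simp_all add: emeasure_space_1)
  also have "\<dots> < \<infinity>"
    using count_finite by (simp add: ennreal_add_less_top of_nat_less_top)
  finally show "(\<integral>\<^sup>+\<omega>. Ntilde Z x n0 \<omega> \<partial>M) < \<infinity>" .
  have "AE \<omega> in M. count \<omega> \<noteq> \<infinity>"
    using count_finite by (intro nn_integral_PInf_AE) simp_all
  with AE_space have "AE \<omega> in M. Ntilde Z x n0 \<omega> < \<infinity>"
  proof eventually_elim
    case (elim \<omega>)
    then have "of_nat n0 + count \<omega> < \<infinity>"
      by (simp add: ennreal_add_less_top of_nat_less_top less_top)
    then show ?case
      using Ntilde_le[OF elim(1)] by (rule le_less_trans[rotated])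
  qed
  then show "prob {\<omega>\<in>space M. Ntilde Z x n0 \<omega> < \<infinity>} = 1"
    using prob_Collect_eq_1[OF sets_Ntilde_less_top] by blast
qed

section \<open>Negative level\<close>

lemma prob_Ntilde_less_top_pos:
  assumes "n0 \<ge> 1"
  shows "0 < prob {\<omega>\<in>space M. Ntilde Z x n0 \<omega> < \<infinity>}"
proof -
  let ?scaled_sum = "\<lambda>\<omega>. (\<Sum>j\<in>{1..n0}. Z j \<omega>) / sqrt (real (card {1..n0}))"
  have "0 < prob {\<omega>\<in>space M. ?scaled_sum \<omega> < sqrt (real n0) * x}"
    using assms by (intro std_normal_less_prob_pos std_normal_scaled_sum_Z) auto
  also have "\<dots> \<le> prob {\<omega>\<in>space M. Ntilde Z x n0 \<omega> < \<infinity>}"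
  proof (rule finite_measure_mono)
    have "Zbar Z n0 \<omega> < x" if "?scaled_sum \<omega> < sqrt (real n0) * x" for \<omega>
    proof -
      have "(\<Sum>j=1..n0. Z j \<omega>) < sqrt (real n0) * x * sqrt (real n0)"
        using that assms by (simp add: pos_divide_less_eq)
      then show ?thesis
        using assms by (simp add: Zbar_less_iff mult.commute mult.left_commute)
    qed
    then show "{\<omega>\<in>space M. ?scaled_sum \<omega> < sqrt (real n0) * x}
        \<subseteq> {\<omega>\<in>space M. Ntilde Z x n0 \<omega> < \<infinity>}"
      by (auto simp: Ntilde_def)
  qed measurable
  finally show ?thesis .
qed

lemma increment_sum_less_prob_le:
  assumes "x < 0" "m < n"
  shows "prob {\<omega>\<in>space M. (\<Sum>j\<in>{m<..n}. Z j \<omega>) < real n * x} \<le> 3 / x^4 * inverse (real n ^ 2)"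
proof -
  have "prob {\<omega>\<in>space M. (\<Sum>j\<in>{m<..n}. Z j \<omega>) < real n * x}
      \<le> prob {\<omega>\<in>space M. real n * (- x) \<le> \<bar>\<Sum>j\<in>{m<..n}. Z j \<omega>\<bar>}"
    by (rule finite_measure_mono) (auto, measurable)
  also have "\<dots> \<le> 3 * real (card {m<..n}) ^ 2 / (real n * (- x))^4"
    using assms by (intro sum_Z_abs_ge_prob_le) (auto simp: mult_pos_neg)
  also have "\<dots> \<le> 3 * real n ^ 2 / (real n * (- x))^4"
    using assms by (intro divide_right_mono mult_left_mono power_mono) auto
  also have "\<dots> = 3 / x^4 * inverse (real n ^ 2)"
    using assms by (simp add: field_simps power_mult_distrib)
  finally show ?thesis .
qed

lemma prob_increment_sum_below_le:
  assumes "x < 0"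
  shows "prob {\<omega>\<in>space M. \<exists>n>m. (\<Sum>j\<in>{m<..n}. Z j \<omega>) < real n * x}
    \<le> (\<Sum>i. 3 / x^4 * inverse (real (i + Suc m) ^ 2))"
proof -
  define f where "f i = 3 / x^4 * inverse (real (i + Suc m) ^ 2)" for i
  define below where "below i = {\<omega>\<in>space M. (\<Sum>j\<in>{m<..i + Suc m}. Z j \<omega>) < real (i + Suc m) * x}" for i
  have "below i \<in> events" for i
    unfolding below_def by measurable
  then have below_sets: "range below \<subseteq> events"
    by auto
  have prob_below: "prob (below i) \<le> f i" for i
    unfolding below_def f_def using assms by (intro increment_sum_less_prob_le) auto
  have "summable (\<lambda>n. inverse (real n ^ 2))"
    by (rule inverse_power_summable) simp
  then have "summable f"
    unfolding f_def[abs_def] by (rule summable_mult[OF summable_ignore_initial_segment])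
  then have summable_prob_below: "summable (\<lambda>i. prob (below i))"
    using prob_below by (intro summable_comparison_test'[OF \<open>summable f\<close>]) simp
  have shift: "(\<exists>i. P (i + Suc m)) \<longleftrightarrow> (\<exists>n>m. P n)" for P
    by (auto simp: less_iff_Suc_add add.commute)
  have "{\<omega>\<in>space M. \<exists>n>m. (\<Sum>j\<in>{m<..n}. Z j \<omega>) < real n * x} = (\<Union>i. below i)"
  proof (intro set_eqI)
    fix \<omega>
    show "\<omega> \<in> {\<omega>\<in>space M. \<exists>n>m. (\<Sum>j\<in>{m<..n}. Z j \<omega>) < real n * x} \<longleftrightarrow> \<omega> \<in> (\<Union>i. below i)"
      using shift[of "\<lambda>n. (\<Sum>j\<in>{m<..n}. Z j \<omega>) < real n * x"] by (auto simp: below_def)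
  qed
  also have "prob \<dots> \<le> (\<Sum>i. prob (below i))"
    by (rule finite_measure_subadditive_countably[OF below_sets summable_prob_below])
  also have "\<dots> \<le> (\<Sum>i. f i)"
    by (rule suminf_le[OF prob_below summable_prob_below \<open>summable f\<close>])
  finally show ?thesis
    by (simp only: f_def)
qed

lemma prob_increment_sums_above_pos:
  assumes "x < 0"
  shows "\<exists>m\<ge>n0. 0 < prob {\<omega>\<in>space M. \<forall>n>m. real n * x \<le> (\<Sum>j\<in>{m<..n}. Z j \<omega>)}"
proof -
  define f where "f n = 3 / x^4 * inverse (real n ^ 2)" for n
  have "summable f"
    unfolding f_def[abs_def] by (intro summable_mult inverse_power_summable) simp
  then obtain N where N: "\<And>n. n \<ge> N \<Longrightarrow> norm (\<Sum>i. f (i + n)) < 1"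
    using suminf_exist_split[of 1 f] by auto
  define m where "m = max N n0"
  let ?below = "{\<omega>\<in>space M. \<exists>n>m. (\<Sum>j\<in>{m<..n}. Z j \<omega>) < real n * x}"
  have "prob ?below \<le> (\<Sum>i. f (i + Suc m))"
    using prob_increment_sum_below_le[OF assms, of m] by (simp only: f_def)
  also have "\<dots> < 1"
    using N[of "Suc m"] by (simp add: m_def abs_less_iff)
  finally have "prob ?below < 1" .
  moreover have "?below \<in> events"
    by measurable
  ultimately have "0 < prob (space M - ?below)"
    by (simp add: prob_compl)
  also have "space M - ?below = {\<omega>\<in>space M. \<forall>n>m. real n * x \<le> (\<Sum>j\<in>{m<..n}. Z j \<omega>)}"
    by (auto simp: not_less)
  finally have "0 < prob {\<omega>\<in>space M. \<forall>n>m. real n * x \<le> (\<Sum>j\<in>{m<..n}. Z j \<omega>)}" .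
  moreover have "m \<ge> n0"
    by (simp add: m_def)
  ultimately show ?thesis
    by blast
qed

lemma prob_all_Z_pos_pos: "0 < prob {\<omega>\<in>space M. \<forall>j\<in>{1..m}. 0 < Z j \<omega>}"
proof (cases "m = 0")
  case False
  then have "prob {\<omega>\<in>space M. \<forall>j\<in>{1..m}. 0 < Z j \<omega>} = prob (\<Inter>j\<in>{1..m}. Z j -` {0<..} \<inter> space M)"
    by (auto intro!: arg_cong[where f = prob])
  also have "\<dots> = (\<Prod>j\<in>{1..m}. prob (Z j -` {0<..} \<inter> space M))"
    using False by (intro indep_varsD[OF indep_Z]) auto
  also have "\<dots> > 0"
  proof (intro prod_pos)
    fix j assume "j \<in> {1..m}"
    then have "0 < prob {\<omega>\<in>space M. - Z j \<omega> < 0}"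
      by (intro std_normal_less_prob_pos std_normal_uminus distributed_Z) simp
    also have "{\<omega>\<in>space M. - Z j \<omega> < 0} = Z j -` {0<..} \<inter> space M"
      by auto
    finally show "0 < prob (Z j -` {0<..} \<inter> space M)" .
  qed
  finally show ?thesis .
qed (simp add: prob_space)

lemma prob_past_future_indep:
  assumes "A \<in> sets (PiM {1..m} (\<lambda>_. borel))" "B \<in> sets (PiM {m<..} (\<lambda>_. borel))"
  shows "prob {\<omega>\<in>space M. (\<lambda>i\<in>{1..m}. Z i \<omega>) \<in> A \<and> (\<lambda>i\<in>{m<..}. Z i \<omega>) \<in> B}
    = prob {\<omega>\<in>space M. (\<lambda>i\<in>{1..m}. Z i \<omega>) \<in> A} * prob {\<omega>\<in>space M. (\<lambda>i\<in>{m<..}. Z i \<omega>) \<in> B}"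
proof -
  have "indep_var (PiM {1..m} (\<lambda>_. borel)) (\<lambda>\<omega>. \<lambda>i\<in>{1..m}. Z i \<omega>)
      (PiM {m<..} (\<lambda>_. borel)) (\<lambda>\<omega>. \<lambda>i\<in>{m<..}. Z i \<omega>)"
    by (rule indep_var_restrict[OF indep_Z]) auto
  from indep_varD[OF this assms] show ?thesis
    by (simp add: vimage_def Int_def conj_commute)
qed

theorem prob_Ntilde_less_top_less_1:
  assumes "x < 0"
  shows "prob {\<omega>\<in>space M. Ntilde Z x n0 \<omega> < \<infinity>} < 1"
proof -
  obtain m where "m \<ge> n0"
    and future_pos: "0 < prob {\<omega>\<in>space M. \<forall>n>m. real n * x \<le> (\<Sum>j\<in>{m<..n}. Z j \<omega>)}"
    using prob_increment_sums_above_pos[OF assms] by blast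
  define A where "A = {f \<in> space (PiM {1..m} (\<lambda>_. borel)). \<forall>j\<in>{1..m}. 0 < (f j :: real)}"
  define B where "B = {f \<in> space (PiM {m<..} (\<lambda>_. borel)). \<forall>n>m. real n * x \<le> (\<Sum>j\<in>{m<..n}. f j)}"
  have [measurable]: "(\<lambda>f. \<Sum>j\<in>{m<..n}. f j :: real) \<in> borel_measurable (PiM {m<..} (\<lambda>_. borel))" for n
    by (intro borel_measurable_sum measurable_component_singleton) auto
  have A_sets: "A \<in> sets (PiM {1..m} (\<lambda>_. borel))" and B_sets: "B \<in> sets (PiM {m<..} (\<lambda>_. borel))"
    unfolding A_def B_def by measurable
  have A_event: "{\<omega>\<in>space M. (\<lambda>i\<in>{1..m}. Z i \<omega>) \<in> A} = {\<omega>\<in>space M. \<forall>j\<in>{1..m}. 0 < Z j \<omega>}"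
    by (auto simp: A_def space_PiM)
  have B_event: "{\<omega>\<in>space M. (\<lambda>i\<in>{m<..}. Z i \<omega>) \<in> B}
      = {\<omega>\<in>space M. \<forall>n>m. real n * x \<le> (\<Sum>j\<in>{m<..n}. Z j \<omega>)}"
    by (auto simp: B_def space_PiM)
  have "0 < prob {\<omega>\<in>space M. (\<lambda>i\<in>{1..m}. Z i \<omega>) \<in> A \<and> (\<lambda>i\<in>{m<..}. Z i \<omega>) \<in> B}"
    using prob_past_future_indep[OF A_sets B_sets, unfolded A_event B_event]
      prob_all_Z_pos_pos[of m] future_pos
    by simp
  also have "\<dots> \<le> prob (space M - {\<omega>\<in>space M. Ntilde Z x n0 \<omega> < \<infinity>})"
    using \<open>m \<ge> n0\<close> Zbar_ge_if_pos_prefix[OF assms, of m Z]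
    by (intro finite_measure_mono) (auto simp: A_def B_def space_PiM Ntilde_def not_less)
  finally show ?thesis
    using prob_compl[OF sets_Ntilde_less_top] by simp
qed

lemma nn_integral_Ntilde_infinite:
  assumes "prob {\<omega>\<in>space M. Ntilde Z x n0 \<omega> < \<infinity>} < 1"
  shows "(\<integral>\<^sup>+\<omega>. Ntilde Z x n0 \<omega> \<partial>M) = \<infinity>"
proof -
  let ?never = "space M - {\<omega>\<in>space M. Ntilde Z x n0 \<omega> < \<infinity>}"
  have "emeasure M ?never \<noteq> 0"
    using assms prob_compl[OF sets_Ntilde_less_top] by (simp add: emeasure_eq_measure)
  then have "\<infinity> = \<infinity> * emeasure M ?never"
    by (simp add: ennreal_top_mult)
  also have "\<dots> = (\<integral>\<^sup>+\<omega>. \<infinity> * indicator ?never \<omega> \<partial>M)"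
    by (rule nn_integral_cmult_indicator[symmetric]) measurable
  also have "\<dots> \<le> (\<integral>\<^sup>+\<omega>. Ntilde Z x n0 \<omega> \<partial>M)"
    by (intro nn_integral_mono) (auto simp: indicator_def)
  finally show ?thesis
    by (simp add: top_unique)
qed

section \<open>Level zero: infinite expectation\<close>

lemma integrable_Z: "j \<ge> 1 \<Longrightarrow> integrable M (Z j)"
  using distributed_integrable_var[OF distributed_Z[of j]] integrable_std_normal_moment[of 1] by simp

lemma expectation_Z: "j \<ge> 1 \<Longrightarrow> expectation (Z j) = 0"
  by (rule standard_normal_distributed_expectation[OF distributed_Z])

lemma integrable_sum_Z: "integrable M (\<lambda>\<omega>. \<Sum>j=1..n. Z j \<omega>)"
  by (intro Bochner_Integration.integrable_sum integrable_Z) auto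

lemma second_moment_sum_Z:
  assumes "n \<ge> 1"
  shows "integrable M (\<lambda>\<omega>. (\<Sum>j=1..n. Z j \<omega>)^2)" and "(\<integral>\<omega>. (\<Sum>j=1..n. Z j \<omega>)^2 \<partial>M) = real n"
proof -
  have S: "distributed M lborel (\<lambda>\<omega>. \<Sum>j=1..n. Z j \<omega>) (normal_density 0 (sqrt (real n)))"
    using sum_Z_distributed[of "{1..n}"] assms by simp
  have "0 < sqrt (real n)"
    using assms by simp
  then show "integrable M (\<lambda>\<omega>. (\<Sum>j=1..n. Z j \<omega>)^2)"
    using distributed_integrable[OF S, of "\<lambda>x. x^2"] integrable_normal_moment[of _ 0 2] by simp
  have "(\<integral>\<omega>. (\<Sum>j=1..n. Z j \<omega>)^2 \<partial>M) = (\<integral>x. normal_density 0 (sqrt (real n)) x * (x - 0)^(2*1) \<partial>lborel)"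
    using distributed_integral[OF S, of "\<lambda>x. x^2"] by simp
  also have "\<dots> = real n"
    using integral_normal_moment_even[OF \<open>0 < sqrt (real n)\<close>, of 0 1] by simp
  finally show "(\<integral>\<omega>. (\<Sum>j=1..n. Z j \<omega>)^2 \<partial>M) = real n" .
qed

lemma integral_Z_Suc_mult_past:
  assumes A: "A \<in> sets (PiM {1..n} (\<lambda>_. borel))"
  shows "(\<integral>\<omega>. Z (Suc n) \<omega> * indicator A (\<lambda>i\<in>{1..n}. Z i \<omega>) \<partial>M) = 0"
proof -
  have "indep_var (PiM {Suc n} (\<lambda>_. borel)) (\<lambda>\<omega>. \<lambda>i\<in>{Suc n}. Z i \<omega>)
      (PiM {1..n} (\<lambda>_. borel)) (\<lambda>\<omega>. \<lambda>i\<in>{1..n}. Z i \<omega>)"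
    by (rule indep_var_restrict[OF indep_Z]) auto
  then have "indep_var borel ((\<lambda>f. f (Suc n)) \<circ> (\<lambda>\<omega>. \<lambda>i\<in>{Suc n}. Z i \<omega>))
      borel (indicator A \<circ> (\<lambda>\<omega>. \<lambda>i\<in>{1..n}. Z i \<omega>))"
    using A by (intro indep_var_compose) auto
  then have indep: "indep_var borel (Z (Suc n)) borel (\<lambda>\<omega>. indicator A (\<lambda>i\<in>{1..n}. Z i \<omega>) :: real)"
    by (simp add: comp_def)
  have "(\<lambda>\<omega>. \<lambda>i\<in>{1..n}. Z i \<omega>) \<in> measurable M (PiM {1..n} (\<lambda>_. borel))"
    by (intro measurable_restrict Z_measurable) auto
  then have "(\<lambda>\<omega>. indicator A (\<lambda>i\<in>{1..n}. Z i \<omega>) :: real) \<in> borel_measurable M"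
    using A by measurable
  then have "(\<integral>\<omega>. Z (Suc n) \<omega> * indicator A (\<lambda>i\<in>{1..n}. Z i \<omega>) \<partial>M)
      = expectation (Z (Suc n)) * expectation (\<lambda>\<omega>. indicator A (\<lambda>i\<in>{1..n}. Z i \<omega>))"
    by (intro indep_var_lebesgue_integral indep integrable_Z integrable_const_bound[where B=1])
      (auto simp: indicator_def)
  then show ?thesis
    by (simp add: expectation_Z)
qed

definition stays_nonneg :: "nat \<Rightarrow> 'a set" where
  "stays_nonneg n = {\<omega>\<in>space M. \<forall>k\<in>{1..n}. 0 \<le> (\<Sum>j=1..k. Z j \<omega>)}"

lemma sets_stays_nonneg [measurable]: "stays_nonneg n \<in> events"
  unfolding stays_nonneg_def by measurable

lemma stays_nonneg_Suc: "\<omega> \<in> stays_nonneg (Suc n) \<longleftrightarrow> \<omega> \<in> stays_nonneg n \<and> 0 \<le> (\<Sum>j=1..Suc n. Z j \<omega>)"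
  using atLeastAtMostSuc_conv[of 1 n] by (auto simp: stays_nonneg_def)

text \<open>Cutting the partial sums at \<open>min k n\<close> keeps them inside the coordinates \<open>1..n\<close>, so the
  past event below is visibly measurable.\<close>
lemma stays_nonneg_eq_past:
  "stays_nonneg n = {\<omega>\<in>space M. (\<lambda>i\<in>{1..n}. Z i \<omega>)
     \<in> {f\<in>space (PiM {1..n} (\<lambda>_. borel)). \<forall>k. 0 \<le> (\<Sum>j=1..min k n. f j :: real)}}"
proof (intro set_eqI)
  have min_conv: "(\<forall>k\<in>{1..n}. 0 \<le> s k) \<longleftrightarrow> (\<forall>k. 0 \<le> s (min k n))" if "s 0 = 0" for s :: "nat \<Rightarrow> real"
  proof
    show "\<forall>k. 0 \<le> s (min k n)" if "\<forall>k\<in>{1..n}. 0 \<le> s k"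
    proof
      fix k
      show "0 \<le> s (min k n)"
        using that \<open>s 0 = 0\<close> by (cases "min k n = 0") auto
    qed
    show "\<forall>k\<in>{1..n}. 0 \<le> s k" if "\<forall>k. 0 \<le> s (min k n)"
      using that by (metis atLeastAtMost_iff min.absorb1)
  qed
  fix \<omega>
  have "(\<Sum>j=1..min k n. (\<lambda>i\<in>{1..n}. Z i \<omega>) j) = (\<Sum>j=1..min k n. Z j \<omega>)" for k
    by (intro sum.cong) auto
  then show "\<omega> \<in> stays_nonneg n \<longleftrightarrow> \<omega> \<in> {\<omega>\<in>space M. (\<lambda>i\<in>{1..n}. Z i \<omega>)
      \<in> {f\<in>space (PiM {1..n} (\<lambda>_. borel)). \<forall>k. 0 \<le> (\<Sum>j=1..min k n. f j :: real)}}"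
    using min_conv[of "\<lambda>k. \<Sum>j=1..k. Z j \<omega>"] by (auto simp: stays_nonneg_def space_PiM PiE_iff)
qed

lemma integral_Z_Suc_stays_nonneg: "(\<integral>\<omega>. Z (Suc n) \<omega> * indicator (stays_nonneg n) \<omega> \<partial>M) = 0"
proof -
  have [measurable]: "(\<lambda>f. \<Sum>j=1..min k n. f j :: real) \<in> borel_measurable (PiM {1..n} (\<lambda>_. borel))" for k
    by (intro borel_measurable_sum measurable_component_singleton) auto
  have "{f\<in>space (PiM {1..n} (\<lambda>_. borel)). \<forall>k. 0 \<le> (\<Sum>j=1..min k n. f j :: real)}
      \<in> sets (PiM {1..n} (\<lambda>_. borel))"
    by measurable
  then have "(\<integral>\<omega>. Z (Suc n) \<omega> * indicator (stays_nonneg n) \<omega> \<partial>M) = (\<integral>\<omega>. Z (Suc n) \<omega> *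
      indicator {f\<in>space (PiM {1..n} (\<lambda>_. borel)). \<forall>k. 0 \<le> (\<Sum>j=1..min k n. f j :: real)}
        (\<lambda>i\<in>{1..n}. Z i \<omega>) \<partial>M)"
    by (intro Bochner_Integration.integral_cong) (auto simp: stays_nonneg_eq_past indicator_def)
  with integral_Z_Suc_mult_past show ?thesis
    by simp
qed

lemma integral_sum_stays_nonneg_mono:
  "(\<integral>\<omega>. (\<Sum>j=1..n. Z j \<omega>) * indicator (stays_nonneg n) \<omega> \<partial>M)
    \<le> (\<integral>\<omega>. (\<Sum>j=1..Suc n. Z j \<omega>) * indicator (stays_nonneg (Suc n)) \<omega> \<partial>M)"
proof -
  have integrable_step: "integrable M (\<lambda>\<omega>. Z (Suc n) \<omega> * indicator (stays_nonneg n) \<omega>)"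
    by (intro integrable_real_mult_indicator integrable_Z sets_stays_nonneg) simp
  have integrable_walk: "integrable M (\<lambda>\<omega>. (\<Sum>j=1..n. Z j \<omega>) * indicator (stays_nonneg n) \<omega>)"
    by (intro integrable_real_mult_indicator integrable_sum_Z sets_stays_nonneg)
  have "(\<integral>\<omega>. (\<Sum>j=1..n. Z j \<omega>) * indicator (stays_nonneg n) \<omega> \<partial>M)
      = (\<integral>\<omega>. (\<Sum>j=1..n. Z j \<omega>) * indicator (stays_nonneg n) \<omega> \<partial>M)
        + (\<integral>\<omega>. Z (Suc n) \<omega> * indicator (stays_nonneg n) \<omega> \<partial>M)"
    by (simp add: integral_Z_Suc_stays_nonneg)
  also have "\<dots> = (\<integral>\<omega>. (\<Sum>j=1..Suc n. Z j \<omega>) * indicator (stays_nonneg n) \<omega> \<partial>M)"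
    using integrable_walk integrable_step by (simp add: distrib_right)
  also have "\<dots> \<le> (\<integral>\<omega>. (\<Sum>j=1..Suc n. Z j \<omega>) * indicator (stays_nonneg (Suc n)) \<omega> \<partial>M)"
    using integrable_walk integrable_step
    by (intro integral_mono integrable_real_mult_indicator integrable_sum_Z sets_stays_nonneg)
      (auto simp: indicator_def stays_nonneg_Suc)
  finally show ?thesis .
qed

lemma integral_Z1_stays_nonneg:
  "(\<integral>\<omega>. (\<Sum>j=1..1. Z j \<omega>) * indicator (stays_nonneg 1) \<omega> \<partial>M) = sqrt (2 / pi) / 2"
proof -
  have "(\<integral>\<omega>. \<bar>Z 1 \<omega>\<bar> \<partial>M) = (\<integral>x. std_normal_density x * \<bar>x\<bar>^(2*0+1) \<partial>lborel)"
    using distributed_integral[OF distributed_Z[of 1], of abs] by simp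
  also have "\<dots> = sqrt (2 / pi)"
    by (subst integral_std_normal_moment_abs_odd) simp
  finally have abs_moment: "(\<integral>\<omega>. \<bar>Z 1 \<omega>\<bar> \<partial>M) = sqrt (2 / pi)" .
  have "(\<integral>\<omega>. (\<Sum>j=1..1. Z j \<omega>) * indicator (stays_nonneg 1) \<omega> \<partial>M) = (\<integral>\<omega>. (\<bar>Z 1 \<omega>\<bar> + Z 1 \<omega>) / 2 \<partial>M)"
    by (intro Bochner_Integration.integral_cong) (auto simp: stays_nonneg_def indicator_def)
  also have "\<dots> = ((\<integral>\<omega>. \<bar>Z 1 \<omega>\<bar> \<partial>M) + (\<integral>\<omega>. Z 1 \<omega> \<partial>M)) / 2"
    using integrable_Z[of 1] by simp
  finally show ?thesis
    using abs_moment expectation_Z[of 1] by simp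
qed

lemma integral_sum_stays_nonneg_ge:
  "n \<ge> 1 \<Longrightarrow> sqrt (2 / pi) / 2 \<le> (\<integral>\<omega>. (\<Sum>j=1..n. Z j \<omega>) * indicator (stays_nonneg n) \<omega> \<partial>M)"
proof (induction n rule: dec_induct)
  case base
  then show ?case
    using integral_Z1_stays_nonneg by simp
next
  case (step n)
  then show ?case
    using integral_sum_stays_nonneg_mono[of n] by simp
qed

lemma integral_sum_stays_nonneg_le:
  assumes "n \<ge> 1" "t > 0"
  shows "(\<integral>\<omega>. (\<Sum>j=1..n. Z j \<omega>) * indicator (stays_nonneg n) \<omega> \<partial>M)
    \<le> real n / (2 * t) + t / 2 * prob (stays_nonneg n)"
proof -
  have am_gm: "s \<le> s^2 / (2 * t) + t / 2" for s :: real
  proof -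
    have "2 * t * s \<le> s^2 + t^2"
      using sum_squares_bound[of s t] by (simp add: power2_eq_square algebra_simps)
    then show ?thesis
      using \<open>t > 0\<close> by (simp add: field_simps power2_eq_square)
  qed
  have integrable_square: "integrable M (\<lambda>\<omega>. (\<Sum>j=1..n. Z j \<omega>)^2 / (2 * t))"
    using second_moment_sum_Z(1)[OF assms(1)] by simp
  have integrable_indicator: "integrable M (\<lambda>\<omega>. t / 2 * indicator (stays_nonneg n) \<omega>)"
    by (intro integrable_mult_right integrable_real_indicator sets_stays_nonneg)
      (simp add: emeasure_eq_measure)
  have "(\<integral>\<omega>. (\<Sum>j=1..n. Z j \<omega>) * indicator (stays_nonneg n) \<omega> \<partial>M)
      \<le> (\<integral>\<omega>. (\<Sum>j=1..n. Z j \<omega>)^2 / (2 * t) + t / 2 * indicator (stays_nonneg n) \<omega> \<partial>M)"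
  proof (rule integral_mono)
    show "integrable M (\<lambda>\<omega>. (\<Sum>j=1..n. Z j \<omega>) * indicator (stays_nonneg n) \<omega>)"
      by (intro integrable_real_mult_indicator integrable_sum_Z sets_stays_nonneg)
    show "integrable M (\<lambda>\<omega>. (\<Sum>j=1..n. Z j \<omega>)^2 / (2 * t) + t / 2 * indicator (stays_nonneg n) \<omega>)"
      using integrable_square integrable_indicator by (rule Bochner_Integration.integrable_add)
    fix \<omega>
    show "(\<Sum>j=1..n. Z j \<omega>) * indicator (stays_nonneg n) \<omega>
        \<le> (\<Sum>j=1..n. Z j \<omega>)^2 / (2 * t) + t / 2 * indicator (stays_nonneg n) \<omega>"
      using am_gm[of "\<Sum>j=1..n. Z j \<omega>"] \<open>t > 0\<close> by (cases "\<omega> \<in> stays_nonneg n") simp_all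
  qed
  also have "\<dots> = (\<integral>\<omega>. (\<Sum>j=1..n. Z j \<omega>)^2 / (2 * t) \<partial>M) + (\<integral>\<omega>. t / 2 * indicator (stays_nonneg n) \<omega> \<partial>M)"
    by (rule Bochner_Integration.integral_add[OF integrable_square integrable_indicator])
  also have "\<dots> = real n / (2 * t) + t / 2 * prob (stays_nonneg n)"
    using second_moment_sum_Z(2)[OF assms(1)] by simp
  finally show ?thesis .
qed

lemma prob_stays_nonneg_ge:
  assumes "n \<ge> 1"
  shows "1 / (2 * pi * real n) \<le> prob (stays_nonneg n)"
proof -
  define c where "c = sqrt (2 / pi) / 2"
  have "c > 0"
    by (simp add: c_def)
  have "c \<le> (\<integral>\<omega>. (\<Sum>j=1..n. Z j \<omega>) * indicator (stays_nonneg n) \<omega> \<partial>M)"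
    using integral_sum_stays_nonneg_ge[OF assms] by (simp add: c_def)
  also have "\<dots> \<le> real n / (2 * (real n / c)) + real n / c / 2 * prob (stays_nonneg n)"
    using assms \<open>c > 0\<close> by (intro integral_sum_stays_nonneg_le) auto
  finally have "c \<le> c / 2 + real n / c / 2 * prob (stays_nonneg n)"
    using assms by simp
  then have "c^2 \<le> real n * prob (stays_nonneg n)"
    using \<open>c > 0\<close> by (simp add: field_simps power2_eq_square)
  then show ?thesis
    using assms by (simp add: c_def power_divide field_simps)
qed

theorem nn_integral_Ntilde_zero_infinite:
  assumes "n0 \<ge> 1"
  shows "(\<integral>\<^sup>+\<omega>. Ntilde Z 0 n0 \<omega> \<partial>M) = \<infinity>"
proof -
  define h where "h = (\<lambda>n. 1 / (2 * pi) * inverse (real n))"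
  have diverges: "(\<Sum>n. ennreal (h n)) = \<infinity>"
  proof (rule ccontr)
    assume "(\<Sum>n. ennreal (h n)) \<noteq> \<infinity>"
    then have "summable h"
      by (intro summable_suminf_not_top) (simp_all add: h_def)
    then show False
      using not_summable_harmonic[where 'a = real] by (simp add: h_def)
  qed
  have "(\<Sum>n. ennreal (h n)) \<le> (\<Sum>n. emeasure M (stays_nonneg n))"
  proof (intro suminf_le)
    fix n
    show "ennreal (h n) \<le> emeasure M (stays_nonneg n)"
    proof (cases "n = 0")
      case False
      then have "h n \<le> prob (stays_nonneg n)"
        using prob_stays_nonneg_ge[of n] by (simp add: h_def field_simps)
      then show ?thesis
        by (simp add: emeasure_eq_measure ennreal_leI)
    qed (simp add: h_def)
  qed simp_all
  also have "(\<Sum>n. emeasure M (stays_nonneg n)) = (\<integral>\<^sup>+\<omega>. (\<Sum>n. indicator (stays_nonneg n) \<omega>) \<partial>M)"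
    by (subst nn_integral_suminf) (simp_all add: borel_measurable_indicator)
  also have "\<dots> \<le> (\<integral>\<^sup>+\<omega>. Ntilde Z 0 n0 \<omega> \<partial>M)"
  proof (intro nn_integral_mono)
    fix \<omega> assume "\<omega> \<in> space M"
    then show "(\<Sum>n. indicator (stays_nonneg n) \<omega>) \<le> Ntilde Z 0 n0 \<omega>"
      using count_nonneg_partial_sums_le_Ntilde[OF assms, of Z \<omega>]
      by (simp add: stays_nonneg_def indicator_def)
  qed
  finally show ?thesis
    using diverges by (simp add: top_unique)
qed

section \<open>Level zero: almost sure passage\<close>

text \<open>Shifted by one, since Kolmogorov's 0-1 law in the library wants a family indexed by all
  of \<^typ>\<open>nat\<close>.\<close>
definition sigma_Z :: "nat \<Rightarrow> 'a set set" where
  "sigma_Z j = sigma_sets (space M) {Z (Suc j) -` B \<inter> space M | B. B \<in> sets borel}"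

lemma sigma_Z_subset: "sigma_Z j \<subseteq> Pow (space M)"
  unfolding sigma_Z_def by (intro subsetI PowI sigma_sets_into_sp[of _ "space M"]) auto

lemma sigma_algebra_sigma_Z: "sigma_algebra (space M) (sigma_Z j)"
  unfolding sigma_Z_def by (intro sigma_algebra_sigma_sets) auto

lemma indep_sets_sigma_Z: "indep_sets sigma_Z UNIV"
proof -
  have range_Suc_eq: "range Suc = {1..}"
    by (auto simp: image_iff Suc_le_eq gr0_conv_Suc)
  have "indep_sets (\<lambda>i. sigma_sets (space M) {Z i -` B \<inter> space M | B. B \<in> sets borel}) (Suc ` UNIV)"
    using indep_Z by (simp add: indep_vars_def range_Suc_eq)
  from indep_sets_reindex[OF this inj_Suc] show ?thesis
    unfolding sigma_Z_def[abs_def] by (simp add: comp_def)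
qed

lemma Z_measurable_future:
  assumes "j > n"
  shows "Z j \<in> measurable (sigma (space M) (\<Union>(sigma_Z ` {n..}))) borel"
proof -
  have generators: "\<Union>(sigma_Z ` {n..}) \<subseteq> Pow (space M)"
    using sigma_Z_subset by blast
  have "Z j -` B \<inter> space M \<in> sigma_sets (space M) (\<Union>(sigma_Z ` {n..}))" if "B \<in> sets borel" for B
  proof -
    have "Z j -` B \<inter> space M \<in> sigma_Z (j - 1)"
      unfolding sigma_Z_def using that assms by (intro sigma_sets.Basic) auto
    then show ?thesis
      using assms by (intro sigma_sets.Basic) auto
  qed
  then show ?thesis
    by (auto simp: measurable_def sets_measure_of[OF generators] space_measure_of[OF generators])
qed

text \<open>The event \<open>liminf S\<^sub>k / \<surd>k \<le> -1\<close>, written with countable quantifiers so that it is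
  measurable.\<close>
definition dips :: "'a set" where
  "dips = {\<omega>\<in>space M. \<forall>i m. \<exists>k\<ge>m. (\<Sum>j=1..k. Z j \<omega>) / sqrt (real k) < -1 + 1 / real (Suc i)}"

lemma sets_dips [measurable]: "dips \<in> events"
  unfolding dips_def by measurable

lemma dips_iff_future_sums:
  "(\<forall>i m. \<exists>k\<ge>m. (\<Sum>j=1..k. Z j \<omega>) / sqrt (real k) < -1 + 1 / real (Suc i))
    \<longleftrightarrow> (\<forall>i m. \<exists>k\<ge>m. (\<Sum>j\<in>{n<..k}. Z j \<omega>) / sqrt (real k) < -1 + 1 / real (Suc i))"
proof (rule frequently_below_cong)
  have "filterlim (\<lambda>k. sqrt (real k)) at_top sequentially"
    by (rule filterlim_compose[OF sqrt_at_top filterlim_real_sequentially])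
  then have "(\<lambda>k. (\<Sum>j=1..n. Z j \<omega>) / sqrt (real k)) \<longlonglongrightarrow> 0"
    by (intro tendsto_divide_0[OF tendsto_const] filterlim_at_top_imp_at_infinity)
  moreover have "\<forall>\<^sub>F k in sequentially. (\<Sum>j=1..n. Z j \<omega>) / sqrt (real k)
      = (\<Sum>j=1..k. Z j \<omega>) / sqrt (real k) - (\<Sum>j\<in>{n<..k}. Z j \<omega>) / sqrt (real k)"
    using eventually_ge_at_top[of n]
  proof eventually_elim
    case (elim k)
    then have "{1..k} = {1..n} \<union> {n<..k}"
      by auto
    then have "(\<Sum>j=1..k. Z j \<omega>) = (\<Sum>j=1..n. Z j \<omega>) + (\<Sum>j\<in>{n<..k}. Z j \<omega>)"
      by (simp only:) (rule sum.union_disjoint, auto)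
    then show ?case
      by (simp add: add_divide_distrib)
  qed
  ultimately show "(\<lambda>k. (\<Sum>j=1..k. Z j \<omega>) / sqrt (real k) - (\<Sum>j\<in>{n<..k}. Z j \<omega>) / sqrt (real k)) \<longlonglongrightarrow> 0"
    by (rule Lim_transform_eventually)
qed

lemma dips_tail: "dips \<in> tail_events sigma_Z"
  unfolding tail_events_def
proof (intro InterI, clarify)
  fix n
  let ?future = "sigma (space M) (\<Union>(sigma_Z ` {n..}))"
  have generators: "\<Union>(sigma_Z ` {n..}) \<subseteq> Pow (space M)"
    using sigma_Z_subset by blast
  have [measurable]: "(\<lambda>\<omega>. \<Sum>j\<in>{n<..k}. Z j \<omega>) \<in> borel_measurable ?future" for k
    by (intro borel_measurable_sum Z_measurable_future) auto
  have "{\<omega>\<in>space ?future. \<forall>i m. \<exists>k\<ge>m. (\<Sum>j\<in>{n<..k}. Z j \<omega>) / sqrt (real k) < -1 + 1 / real (Suc i)}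
      \<in> sets ?future"
    by measurable
  then show "dips \<in> sigma_sets (space M) (\<Union>(sigma_Z ` {n..}))"
    using dips_iff_future_sums[of _ n]
    by (simp add: dips_def sets_measure_of[OF generators] space_measure_of[OF generators])
qed

lemma frequently_below_in_dips:
  assumes "\<omega> \<in> space M" and freq: "\<And>m. \<exists>k\<ge>m. (\<Sum>j=1..k. Z j \<omega>) / sqrt (real k) < -1"
  shows "\<omega> \<in> dips"
proof -
  have "\<exists>k\<ge>m. (\<Sum>j=1..k. Z j \<omega>) / sqrt (real k) < -1 + 1 / real (Suc i)" for i m
  proof -
    obtain k where "k \<ge> m" "(\<Sum>j=1..k. Z j \<omega>) / sqrt (real k) < -1"
      using freq by blast
    moreover have "(0::real) < 1 / real (Suc i)"
      by simp
    ultimately have "(\<Sum>j=1..k. Z j \<omega>) / sqrt (real k) < -1 + 1 / real (Suc i)"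
      by linarith
    with \<open>k \<ge> m\<close> show ?thesis
      by blast
  qed
  with assms(1) show ?thesis
    unfolding dips_def by blast
qed

lemma prob_dips: "prob dips = 1"
proof -
  define p where "p = measure (density lborel std_normal_density) {..< -1}"
  define below where "below k = {\<omega>\<in>space M. (\<Sum>j=1..Suc k. Z j \<omega>) / sqrt (real (Suc k)) < -1}" for k
  have "below k \<in> events" for k
    unfolding below_def by measurable
  moreover have "p \<le> prob (below k)" for k
    using std_normal_less_prob[OF std_normal_scaled_sum_Z[of "{1..Suc k}"]] by (simp add: below_def p_def)
  ultimately have "p \<le> prob (\<Inter>m. \<Union>k\<in>{m..}. below k)"
    by (rule prob_infinitely_often_ge)
  also have "\<dots> \<le> prob dips"
  proof (rule finite_measure_mono[OF _ sets_dips], rule subsetI)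
    fix \<omega> assume "\<omega> \<in> (\<Inter>m. \<Union>k\<in>{m..}. below k)"
    then have "\<exists>k\<ge>m. \<omega> \<in> below k" for m
      by blast
    then have "\<omega> \<in> space M" and "\<exists>k\<ge>m. (\<Sum>j=1..k. Z j \<omega>) / sqrt (real k) < -1" for m
      unfolding below_def by (blast intro: le_SucI)+
    then show "\<omega> \<in> dips"
      by (rule frequently_below_in_dips)
  qed
  finally have "p \<le> prob dips" .
  moreover have "0 < p"
    unfolding p_def by (rule std_normal_measure_lessThan_pos)
  ultimately have "prob dips > 0"
    by simp
  with kolmogorov_0_1_law[OF sigma_algebra_sigma_Z indep_sets_sigma_Z dips_tail] show ?thesis
    by auto
qed

theorem prob_Ntilde_zero_finite:
  assumes "n0 \<ge> 1"
  shows "prob {\<omega>\<in>space M. Ntilde Z 0 n0 \<omega> < \<infinity>} = 1"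
proof -
  have "dips \<subseteq> {\<omega>\<in>space M. Ntilde Z 0 n0 \<omega> < \<infinity>}"
  proof
    fix \<omega> assume "\<omega> \<in> dips"
    then have "\<omega> \<in> space M" "\<exists>k\<ge>n0. (\<Sum>j=1..k. Z j \<omega>) / sqrt (real k) < -1 + 1 / real (Suc 0)"
      unfolding dips_def by blast+
    then obtain k where "k \<ge> n0" "(\<Sum>j=1..k. Z j \<omega>) / sqrt (real k) < 0"
      by auto
    with assms have "Zbar Z k \<omega> < 0"
      by (simp add: Zbar_def divide_less_0_iff)
    with \<open>k \<ge> n0\<close> \<open>\<omega> \<in> space M\<close> show "\<omega> \<in> {\<omega>\<in>space M. Ntilde Z 0 n0 \<omega> < \<infinity>}"
      by (auto simp: Ntilde_def)
  qed
  then have "prob dips \<le> prob {\<omega>\<in>space M. Ntilde Z 0 n0 \<omega> < \<infinity>}"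
    by (intro finite_measure_mono) measurable
  then show ?thesis
    using prob_dips by (intro antisym[OF prob_le_1]) simp
qed

end

theorem lemma4:
  fixes M :: "'a measure" and Z :: "nat \<Rightarrow> 'a \<Rightarrow> real" and n0 :: nat
  assumes "prob_space M"
    and "prob_space.indep_vars M (\<lambda>_. borel) Z {1..}"
    and "\<And>j. j \<ge> 1 \<Longrightarrow> distributed M lborel (Z j) std_normal_density"
    and "n0 \<ge> 1"
  shows "(\<forall>x>0. measure M {\<omega> \<in> space M. Ntilde Z x n0 \<omega> < \<infinity>} = 1
                \<and> (\<integral>\<^sup>+ \<omega>. Ntilde Z x n0 \<omega> \<partial>M) < \<infinity>)
       \<and> (\<forall>x<0. 0 < measure M {\<omega> \<in> space M. Ntilde Z x n0 \<omega> < \<infinity>}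
                \<and> measure M {\<omega> \<in> space M. Ntilde Z x n0 \<omega> < \<infinity>} < 1
                \<and> (\<integral>\<^sup>+ \<omega>. Ntilde Z x n0 \<omega> \<partial>M) = \<infinity>)
       \<and> (measure M {\<omega> \<in> space M. Ntilde Z 0 n0 \<omega> < \<infinity>} = 1
                \<and> (\<integral>\<^sup>+ \<omega>. Ntilde Z 0 n0 \<omega> \<partial>M) = \<infinity>)"
proof -
  interpret iid_std_normal M Z
    using assms(1-3) by (simp add: iid_std_normal_def iid_std_normal_axioms_def)
  show ?thesis
    using Ntilde_pos_finite prob_Ntilde_less_top_pos[OF assms(4)]
      prob_Ntilde_less_top_less_1 nn_integral_Ntilde_infinite[OF prob_Ntilde_less_top_less_1]
      prob_Ntilde_zero_finite[OF assms(4)] nn_integral_Ntilde_zero_infinite[OF assms(4)]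
    by blast
qed

end
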